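(* Every discrete loss $\ell:\mathcal{R}\to\mathbb{R}^{\mathcal{Y}}_+$ is embedded by some polyhedral loss $L:\mathbb{R}^d\to\mathbb{R}^{\mathcal{Y}}_+$ (for some $d$).
   Context: $\mathcal{Y}$ is a finite set of labels; $\mathbb{R}^{\mathcal{Y}}_+$ is the nonnegative orthant; $\Delta_{\mathcal{Y}}$ is the probability simplex on $\mathcal{Y}$. A loss is a map $L:\mathcal{R}\to\mathbb{R}^{\mathcal{Y}}_+$; expected loss under $p$ is $\langle p,L(r)\rangle$. A loss is discrete if $\mathcal{R}$ is finite. $L:\mathbb{R}^d\to\mathbb{R}^{\mathcal{Y}}_+$ is polyhedral if each coordinate $u\mapsto L(u)_y$ is a pointwise maximum of finitely many affine functions. $L$ is minimizable if $\inf_r\langle p,L(r)\rangle$ is attained for all $p$; then $\mathrm{prop}[L](p)=\arg\min_r\langle p,L(r)\rangle$. $\mathcal{S}\subseteq\mathcal{R}$ is representative for minimizable $L$ if $\mathrm{prop}[L](p)\cap\mathcal{S}\neq\emptyset$ for all $p\in\Delta_{\mathcal{Y}}$. A minimizable $L:\mathbb{R}^d\to\mathbb{R}^{\mathcal{Y}}_+$ embeds $\ell$ if there exist a representative set $\mathcal{S}$ for $\ell$ and an injective $\varphi:\mathcal{S}\to\mathbb{R}^d$ with (i) $L(\varphi(r))=\ell(r)$ for all $r\in\mathcal{S}$ and (ii) for all $p$ and $r\in\mathcal{S}$: $r\in\mathrm{prop}[\ell](p)\iff\varphi(r)\in\mathrm{prop}[L](p)$. *)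

theory Defs
  imports Main Complex_Main
begin

definition simplex :: "('y::finite \<Rightarrow> real) set" where
  "simplex = {p. (\<forall>y. 0 \<le> p y) \<and> (\<Sum>y\<in>UNIV. p y) = 1}"

definition exp_loss :: "('y::finite \<Rightarrow> real) \<Rightarrow> ('y \<Rightarrow> real) \<Rightarrow> real" where
  "exp_loss p v = (\<Sum>y\<in>UNIV. p y * v y)"

definition is_loss :: "'r set \<Rightarrow> ('r \<Rightarrow> 'y \<Rightarrow> real) \<Rightarrow> bool" where
  "is_loss Dom loss \<longleftrightarrow> (\<forall>r\<in>Dom. \<forall>y. 0 \<le> loss r y)"

definition prop_on :: "'r set \<Rightarrow> ('r \<Rightarrow> 'y::finite \<Rightarrow> real) \<Rightarrow> ('y \<Rightarrow> real) \<Rightarrow> 'r set" where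
  "prop_on Dom loss p = {r\<in>Dom. \<forall>r'\<in>Dom. exp_loss p (loss r) \<le> exp_loss p (loss r')}"

definition minimizable :: "'r set \<Rightarrow> ('r \<Rightarrow> 'y::finite \<Rightarrow> real) \<Rightarrow> bool" where
  "minimizable Dom loss \<longleftrightarrow> (\<forall>p\<in>simplex. \<exists>r\<in>Dom. \<forall>r'\<in>Dom. exp_loss p (loss r) \<le> exp_loss p (loss r'))"

definition representative :: "'r set \<Rightarrow> ('r \<Rightarrow> 'y::finite \<Rightarrow> real) \<Rightarrow> 'r set \<Rightarrow> bool" where
  "representative Dom loss S \<longleftrightarrow> S \<subseteq> Dom \<and> (\<forall>p\<in>simplex. prop_on Dom loss p \<inter> S \<noteq> {})"

text \<open>R^d is represented as functions nat => real vanishing at all indices >= d.\<close>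
definition Rn :: "nat \<Rightarrow> (nat \<Rightarrow> real) set" where
  "Rn d = {u. \<forall>i\<ge>d. u i = 0}"

definition polyhedral :: "nat \<Rightarrow> ((nat \<Rightarrow> real) \<Rightarrow> 'y \<Rightarrow> real) \<Rightarrow> bool" where
  "polyhedral d L \<longleftrightarrow> (\<forall>y. \<exists>k::nat. \<exists>A::nat \<Rightarrow> nat \<Rightarrow> real. \<exists>B::nat \<Rightarrow> real. 0 < k \<and>
      (\<forall>u\<in>Rn d. L u y = Max {(\<Sum>i<d. A j i * u i) + B j | j. j < k}))"

definition embeds :: "nat \<Rightarrow> ((nat \<Rightarrow> real) \<Rightarrow> 'y::finite \<Rightarrow> real) \<Rightarrow> 'r set \<Rightarrow> ('r \<Rightarrow> 'y \<Rightarrow> real) \<Rightarrow> bool" where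
  "embeds d L R l \<longleftrightarrow> minimizable (Rn d) L \<and>
     (\<exists>S \<phi>. representative R l S \<and> inj_on \<phi> S \<and> \<phi> ` S \<subseteq> Rn d \<and>
        (\<forall>r\<in>S. L (\<phi> r) = l r) \<and>
        (\<forall>p\<in>simplex. \<forall>r\<in>S. r \<in> prop_on R l p \<longleftrightarrow> \<phi> r \<in> prop_on (Rn d) L p))"

end

theory Submission
  imports Defs
begin

text \<open>Enumerate the reports as \<open>r\<^sub>0, \<dots>, r\<^sub>n\<^sub>-\<^sub>1\<close> and embed \<open>r\<^sub>k\<close> as the unit vector \<open>e\<^sub>k\<close>.
  The surrogate interpolates the discrete losses linearly and adds an exact penalty for leaving
  the standard simplex:
  \<open>L(u) = \<Sum>\<^sub>i u\<^sub>i \<ell>(r\<^sub>i) + C \<cdot> max(0, max\<^sub>i (-u\<^sub>i), |1 - \<Sum>\<^sub>i u\<^sub>i|)\<close>.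
  Both terms are polyhedral and \<open>L(e\<^sub>k) = \<ell>(r\<^sub>k)\<close>. For a distribution \<open>p\<close> the expected
  surrogate loss is \<open>\<Sum>\<^sub>i u\<^sub>i E\<^sub>i + C D\<close> with \<open>E\<^sub>i\<close> the expected discrete losses and \<open>D\<close> the
  penalty; since \<open>u\<^sub>i \<ge> -D\<close> and \<open>\<Sum>\<^sub>i u\<^sub>i \<ge> 1 - D\<close>, this is at least \<open>min\<^sub>i E\<^sub>i\<close> as soon as
  \<open>C \<ge> (n + 1) max \<ell>\<close>. So the Bayes risks agree and \<open>e\<^sub>k\<close> is optimal exactly when \<open>r\<^sub>k\<close> is.\<close>

lemma exp_loss_mono:
  assumes "\<forall>y. 0 \<le> p y" and "\<And>y. v y \<le> w y"
  shows "exp_loss p v \<le> exp_loss p w"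
  unfolding exp_loss_def using assms by (intro sum_mono mult_left_mono) auto

lemma exp_loss_affine:
  assumes "p \<in> simplex"
  shows "exp_loss p (\<lambda>y. (\<Sum>i\<in>I. u i * v i y) + c) = (\<Sum>i\<in>I. u i * exp_loss p (v i)) + c"
proof -
  have "exp_loss p (\<lambda>y. (\<Sum>i\<in>I. u i * v i y) + c)
      = (\<Sum>i\<in>I. u i * exp_loss p (v i)) + (\<Sum>y\<in>UNIV. p y) * c"
    by (simp add: exp_loss_def algebra_simps sum.distrib sum_distrib_left sum_distrib_right
        sum.swap[of _ UNIV])
  with assms show ?thesis by (simp add: simplex_def)
qed

lemma exp_loss_const: "p \<in> simplex \<Longrightarrow> exp_loss p (\<lambda>_. c) = c"
  using exp_loss_affine[of p _ _ "{}"] by simp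

lemma exp_loss_ge: "p \<in> simplex \<Longrightarrow> (\<And>y. m \<le> v y) \<Longrightarrow> m \<le> exp_loss p v"
  using exp_loss_mono[of p "\<lambda>_. m" v] by (auto simp: exp_loss_const simplex_def)

lemma exp_loss_le: "p \<in> simplex \<Longrightarrow> (\<And>y. v y \<le> M) \<Longrightarrow> exp_loss p v \<le> M"
  using exp_loss_mono[of p v "\<lambda>_. M"] by (auto simp: exp_loss_const simplex_def)

lemma point_mass_in_simplex: "(\<lambda>z. if z = y then 1 else 0) \<in> simplex"
  by (simp add: simplex_def)

lemma exp_loss_point_mass: "exp_loss (\<lambda>z. if z = y then 1 else 0) v = v y"
  by (simp add: exp_loss_def if_distrib if_distribR cong: if_cong)

lemma prop_on_nonempty:
  assumes "finite R" and "R \<noteq> {}"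
  shows "prop_on R l p \<noteq> {}"
  using ex_is_arg_min_if_finite[OF assms, of "\<lambda>r. exp_loss p (l r)"]
  by (auto simp: is_arg_min_linorder prop_on_def)

lemma embedsI:
  assumes "finite R" and "R \<noteq> {}"
    and "inj_on \<phi> R" and "\<phi> ` R \<subseteq> Rn d" and "\<And>r. r \<in> R \<Longrightarrow> L (\<phi> r) = l r"
    and lower: "\<And>p r u. p \<in> simplex \<Longrightarrow> r \<in> prop_on R l p \<Longrightarrow> u \<in> Rn d \<Longrightarrow>
      exp_loss p (l r) \<le> exp_loss p (L u)"
  shows "embeds d L R l"
proof -
  have optimal: "\<phi> r \<in> prop_on (Rn d) L p" if "p \<in> simplex" "r \<in> prop_on R l p" for p r
    using that assms(4,5) lower by (auto simp: prop_on_def)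
  have "minimizable (Rn d) L"
    unfolding minimizable_def
    using optimal prop_on_nonempty[OF assms(1,2)] by (fastforce simp: prop_on_def)
  moreover have "representative R l R"
    using prop_on_nonempty[OF assms(1,2)] by (auto simp: representative_def prop_on_def)
  moreover have "r \<in> prop_on R l p"
    if "p \<in> simplex" "r \<in> R" "\<phi> r \<in> prop_on (Rn d) L p" for p r
    using that assms(4,5) by (force simp: prop_on_def)
  ultimately show ?thesis
    unfolding embeds_def using assms(3-5) optimal by blast
qed

lemma is_loss_if_dominates:
  assumes "finite R" and "R \<noteq> {}" and "is_loss R l"
    and lower: "\<And>p r u. p \<in> simplex \<Longrightarrow> r \<in> prop_on R l p \<Longrightarrow> u \<in> D \<Longrightarrow>
      exp_loss p (l r) \<le> exp_loss p (L u)"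
  shows "is_loss D L"
  unfolding is_loss_def
proof (intro ballI allI)
  fix u y assume "u \<in> D"
  obtain r where r: "r \<in> prop_on R l (\<lambda>z. if z = y then 1 else 0)"
    using prop_on_nonempty[OF assms(1,2)] by blast
  from lower[OF point_mass_in_simplex r \<open>u \<in> D\<close>] have "l r y \<le> L u y"
    by (simp add: exp_loss_point_mass)
  moreover have "0 \<le> l r y" using r assms(3) by (auto simp: prop_on_def is_loss_def)
  ultimately show "0 \<le> L u y" by simp
qed

lemma polyhedral_linear_plus_max_affine:
  fixes k :: nat
  assumes "0 < k" and "0 \<le> s"
    and L: "\<And>u y. u \<in> Rn d \<Longrightarrow>
      L u y = (\<Sum>i<d. c y i * u i) + s * Max ((\<lambda>j. (\<Sum>i<d. P j i * u i) + Q j) ` {..<k})"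
  shows "polyhedral d L"
  unfolding polyhedral_def
proof (intro allI exI[of _ k] exI[of _ "\<lambda>j i. c _ i + s * P j i"] exI[of _ "\<lambda>j. s * Q j"]
    conjI ballI)
  fix y u assume "u \<in> Rn d"
  let ?lin = "\<Sum>i<d. c y i * u i"
  have "mono (\<lambda>x. ?lin + s * x)"
    using \<open>0 \<le> s\<close> by (intro monoI) (simp add: mult_left_mono)
  then have "L u y = Max ((\<lambda>x. ?lin + s * x) ` (\<lambda>j. (\<Sum>i<d. P j i * u i) + Q j) ` {..<k})"
    using L[OF \<open>u \<in> Rn d\<close>] \<open>0 < k\<close> by (subst mono_Max_commute[symmetric]) (auto intro: finite_imageI)
  also have "\<dots> = Max ((\<lambda>j. (\<Sum>i<d. (c y i + s * P j i) * u i) + s * Q j) ` {..<k})"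
    by (simp add: image_image algebra_simps sum.distrib sum_distrib_left)
  also have "\<dots> = Max {(\<Sum>i<d. (c y i + s * P j i) * u i) + s * Q j | j. j < k}"
    by (intro arg_cong[where f = Max]) auto
  finally show "L u y = Max {(\<Sum>i<d. (c y i + s * P j i) * u i) + s * Q j | j. j < k}" .
qed (use \<open>0 < k\<close> in simp)

definition unit_vec :: "nat \<Rightarrow> nat \<Rightarrow> real" where
  "unit_vec k = (\<lambda>i. if i = k then 1 else 0)"

lemma unit_vec_in_Rn: "k < n \<Longrightarrow> unit_vec k \<in> Rn n"
  by (simp add: Rn_def unit_vec_def)

lemma inj_unit_vec: "inj unit_vec"
  by (rule injI) (metis unit_vec_def zero_neq_one)

lemma sum_unit_vec_mult: "k < n \<Longrightarrow> (\<Sum>i<n. unit_vec k i * x i) = x k"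
  by (subst sum.cong[OF refl, of _ _ "\<lambda>i. if i = k then x i else 0"]) (auto simp: unit_vec_def)

text \<open>Index \<open>n\<close> (like every index beyond \<open>n + 2\<close>) gives the constant piece \<open>0\<close>.\<close>

definition simplex_penalty_piece :: "nat \<Rightarrow> nat \<Rightarrow> (nat \<Rightarrow> real) \<Rightarrow> real" where
  "simplex_penalty_piece n j u =
     (if j < n then - u j else if j = n + 1 then 1 - (\<Sum>i<n. u i)
      else if j = n + 2 then (\<Sum>i<n. u i) - 1 else 0)"

definition simplex_penalty :: "nat \<Rightarrow> (nat \<Rightarrow> real) \<Rightarrow> real" where
  "simplex_penalty n u = Max ((\<lambda>j. simplex_penalty_piece n j u) ` {..<n + 3})"

lemma simplex_penalty_piece_affine:
  "\<exists>P Q. \<forall>j u. simplex_penalty_piece n j u = (\<Sum>i<n. P j i * u i) + Q j"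
proof -
  define P :: "nat \<Rightarrow> nat \<Rightarrow> real" where "P j i =
     (if j < n then - unit_vec j i else if j = n + 1 then -1 else if j = n + 2 then 1 else 0)"
    for j i
  define Q :: "nat \<Rightarrow> real" where "Q j = (if j = n + 1 then 1 else if j = n + 2 then -1 else 0)" for j
  have "simplex_penalty_piece n j u = (\<Sum>i<n. P j i * u i) + Q j" for j u
    by (cases "j < n")
      (auto simp: simplex_penalty_piece_def P_def Q_def sum_unit_vec_mult sum_negf)
  then show ?thesis by blast
qed

lemma simplex_penalty_ge_piece:
  "j < n + 3 \<Longrightarrow> simplex_penalty_piece n j u \<le> simplex_penalty n u"
  unfolding simplex_penalty_def by (rule Max_ge) auto

lemma simplex_penalty_ge:
  shows simplex_penalty_nonneg: "0 \<le> simplex_penalty n u"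
    and simplex_penalty_ge_coord: "i < n \<Longrightarrow> - u i \<le> simplex_penalty n u"
    and simplex_penalty_ge_mass: "1 - (\<Sum>i<n. u i) \<le> simplex_penalty n u"
  using simplex_penalty_ge_piece[of n n u] simplex_penalty_ge_piece[of i n u]
    simplex_penalty_ge_piece[of "n + 1" n u]
  by (simp_all add: simplex_penalty_piece_def)

lemma simplex_penalty_unit_vec:
  assumes "k < n"
  shows "simplex_penalty n (unit_vec k) = 0"
proof -
  have "(\<Sum>i<n. unit_vec k i) = 1"
    using assms by (simp add: unit_vec_def)
  then have "simplex_penalty_piece n j (unit_vec k) \<le> 0" for j
    by (simp add: simplex_penalty_piece_def unit_vec_def)
  moreover have "simplex_penalty_piece n n (unit_vec k) = 0"
    by (simp add: simplex_penalty_piece_def)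
  ultimately show ?thesis
    unfolding simplex_penalty_def by (intro Max_eqI) force+
qed

lemma weighted_sum_plus_penalty_ge:
  fixes u E :: "nat \<Rightarrow> real"
  assumes E: "\<And>i. i < n \<Longrightarrow> m \<le> E i" "\<And>i. i < n \<Longrightarrow> E i \<le> M"
    and "0 \<le> m" and "m \<le> M" and "0 \<le> D"
    and u: "\<And>i. i < n \<Longrightarrow> - u i \<le> D" and mass: "1 - (\<Sum>i<n. u i) \<le> D"
    and C: "(real n + 1) * M \<le> C"
  shows "m \<le> (\<Sum>i<n. u i * E i) + C * D"
proof -
  have term_ge: "u i * m - D * M \<le> u i * E i" if "i < n" for i
  proof -
    have "- D * (E i - m) \<le> u i * (E i - m)"
      using E(1)[OF that] u[OF that] by (intro mult_right_mono) auto
    moreover have "D * (E i - m) \<le> D * M"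
      using E(2)[OF that] \<open>0 \<le> m\<close> \<open>0 \<le> D\<close> by (intro mult_left_mono) auto
    ultimately show ?thesis by (simp add: algebra_simps)
  qed
  have "m * (1 - D) - real n * D * M \<le> m * (\<Sum>i<n. u i) - real n * D * M"
    using mass \<open>0 \<le> m\<close> by (simp add: mult_left_mono)
  also have "\<dots> = (\<Sum>i<n. u i * m - D * M)"
    by (simp add: sum_subtractf sum_distrib_left algebra_simps)
  also have "\<dots> \<le> (\<Sum>i<n. u i * E i)"
    using term_ge by (intro sum_mono) auto
  finally have "m - (m + real n * M) * D \<le> (\<Sum>i<n. u i * E i)"
    by (simp add: algebra_simps)
  moreover have "(m + real n * M) * D \<le> C * D"
    using C \<open>m \<le> M\<close> \<open>0 \<le> D\<close> by (intro mult_right_mono) (auto simp: algebra_simps)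
  ultimately show ?thesis by simp
qed

definition interpolating_surrogate ::
    "nat \<Rightarrow> real \<Rightarrow> (nat \<Rightarrow> 'y \<Rightarrow> real) \<Rightarrow> (nat \<Rightarrow> real) \<Rightarrow> 'y \<Rightarrow> real" where
  "interpolating_surrogate n C a u y = (\<Sum>i<n. u i * a i y) + C * simplex_penalty n u"

lemma interpolating_surrogate_unit_vec:
  "k < n \<Longrightarrow> interpolating_surrogate n C a (unit_vec k) = a k"
  by (rule ext) (simp add: interpolating_surrogate_def simplex_penalty_unit_vec sum_unit_vec_mult)

lemma polyhedral_interpolating_surrogate:
  assumes "0 \<le> C"
  shows "polyhedral n (interpolating_surrogate n C a)"
proof -
  obtain P Q where "\<And>j u. simplex_penalty_piece n j u = (\<Sum>i<n. P j i * u i) + Q j"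
    using simplex_penalty_piece_affine by blast
  then show ?thesis
    using assms
    by (intro polyhedral_linear_plus_max_affine[where c = "\<lambda>y i. a i y" and P = P and Q = Q])
      (auto simp: interpolating_surrogate_def simplex_penalty_def mult.commute)
qed

lemma exp_loss_interpolating_surrogate_ge:
  assumes "is_loss R l" and l_le_M: "\<And>r y. r \<in> R \<Longrightarrow> l r y \<le> M"
    and f: "\<And>i. i < n \<Longrightarrow> f i \<in> R"
    and p: "p \<in> simplex" and r: "r \<in> prop_on R l p"
  shows "exp_loss p (l r) \<le> exp_loss p (interpolating_surrogate n ((real n + 1) * M) (\<lambda>i. l (f i)) u)"
proof -
  have "r \<in> R" and r_min: "\<And>r'. r' \<in> R \<Longrightarrow> exp_loss p (l r) \<le> exp_loss p (l r')"
    using r by (auto simp: prop_on_def)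
  have "exp_loss p (l r) \<le> (\<Sum>i<n. u i * exp_loss p (l (f i))) + (real n + 1) * M * simplex_penalty n u"
  proof (rule weighted_sum_plus_penalty_ge)
    show "0 \<le> exp_loss p (l r)"
      using \<open>r \<in> R\<close> \<open>is_loss R l\<close> exp_loss_ge[OF p] by (auto simp: is_loss_def)
    show "exp_loss p (l (f i)) \<le> M" if "i < n" for i
      using f[OF that] l_le_M exp_loss_le[OF p] by auto
    show "exp_loss p (l r) \<le> M"
      using \<open>r \<in> R\<close> l_le_M exp_loss_le[OF p] by auto
    show "exp_loss p (l r) \<le> exp_loss p (l (f i))" if "i < n" for i
      using r_min f that by blast
    show "- u i \<le> simplex_penalty n u" if "i < n" for i
      using that by (rule simplex_penalty_ge_coord)
  qed (simp_all add: simplex_penalty_nonneg simplex_penalty_ge_mass)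
  also have "\<dots> = exp_loss p (interpolating_surrogate n ((real n + 1) * M) (\<lambda>i. l (f i)) u)"
    unfolding interpolating_surrogate_def by (rule exp_loss_affine[OF p, symmetric])
  finally show ?thesis .
qed

lemma embeds_interpolating_surrogate:
  assumes "finite R" and "R \<noteq> {}" and "is_loss R l" and f: "bij_betw f {..<n} R"
    and l_le_M: "\<And>r y. r \<in> R \<Longrightarrow> l r y \<le> M"
  defines "L \<equiv> interpolating_surrogate n ((real n + 1) * M) (\<lambda>i. l (f i))"
  shows "is_loss (Rn n) L \<and> polyhedral n L \<and> embeds n L R l"
proof (intro conjI)
  define g where "g = inv_into {..<n} f"
  have g_lt: "\<And>r. r \<in> R \<Longrightarrow> g r < n" and f_g: "\<And>r. r \<in> R \<Longrightarrow> f (g r) = r"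
    using f bij_betw_apply[OF bij_betw_inv_into[OF f]] by (auto simp: g_def bij_betw_inv_into_right)
  have f_in: "\<And>i. i < n \<Longrightarrow> f i \<in> R"
    using f by (auto simp: bij_betw_def)
  have lower: "exp_loss p (l r) \<le> exp_loss p (L u)"
    if "p \<in> simplex" and "r \<in> prop_on R l p" for p r u
    unfolding L_def using \<open>is_loss R l\<close> l_le_M f_in that by (rule exp_loss_interpolating_surrogate_ge)
  show "is_loss (Rn n) L"
    using assms(1-3) lower by (rule is_loss_if_dominates)
  obtain r where "r \<in> R" using \<open>R \<noteq> {}\<close> by blast
  then have "0 \<le> M"
    using \<open>is_loss R l\<close> l_le_M order_trans by (fastforce simp: is_loss_def)
  then show "polyhedral n L"
    unfolding L_def by (intro polyhedral_interpolating_surrogate) simp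
  show "embeds n L R l"
  proof (rule embedsI[OF \<open>finite R\<close> \<open>R \<noteq> {}\<close> _ _ _ lower])
    show "inj_on (\<lambda>r. unit_vec (g r)) R"
    proof (rule inj_onI)
      fix r r' assume "r \<in> R" "r' \<in> R" "unit_vec (g r) = unit_vec (g r')"
      then show "r = r'" using f_g injD[OF inj_unit_vec] by metis
    qed
    show "(\<lambda>r. unit_vec (g r)) ` R \<subseteq> Rn n" and "\<And>r. r \<in> R \<Longrightarrow> L (unit_vec (g r)) = l r"
      using g_lt f_g by (auto simp: L_def unit_vec_in_Rn interpolating_surrogate_unit_vec)
  qed
qed

theorem theorem4:
  fixes R :: "'r set" and l :: "'r \<Rightarrow> 'y::finite \<Rightarrow> real"
  assumes "finite R" and "R \<noteq> {}" and "is_loss R l"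
  shows "\<exists>d::nat. \<exists>L :: (nat \<Rightarrow> real) \<Rightarrow> 'y \<Rightarrow> real.
           is_loss (Rn d) L \<and> polyhedral d L \<and> embeds d L R l"
proof -
  obtain f where f: "bij_betw f {..<card R} R"
    using ex_bij_betw_nat_finite[OF \<open>finite R\<close>] by (auto simp: atLeast0LessThan)
  have "l r y \<le> Max (case_prod l ` (R \<times> UNIV))" if "r \<in> R" for r y
    using \<open>finite R\<close> that by (intro Max_ge) auto
  from embeds_interpolating_surrogate[OF assms f this] show ?thesis by blast
qed

end
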